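(* Let $\mathbb{F}$ be an infinite field with $\operatorname{char}(\mathbb{F})\neq 2$, let $G$ be a group with a group involution $\ast$, extended $\mathbb{F}$-linearly to $\mathbb{F}G$. Suppose that $\mathbb{F}G$ is normal with respect to $\ast$. Then $g^2\in\zeta(G)$ for all $g\in G$.
   Context: A group involution on $G$ is a map $\ast:G\to G$ with $(gh)^\ast=h^\ast g^\ast$ and $(g^\ast)^\ast=g$ for all $g,h\in G$; it is extended $\mathbb{F}$-linearly to an algebra involution of $\mathbb{F}G$. The algebra $\mathbb{F}G$ is normal (with respect to $\ast$) if $\alpha\alpha^\ast=\alpha^\ast\alpha$ for all $\alpha\in\mathbb{F}G$. $\zeta(G)$ denotes the center of $G$. *)

theory Defs
  imports "HOL-Algebra.Group"
begin

definition group_center :: "('g, 'b) monoid_scheme \<Rightarrow> 'g set" where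
  "group_center G = {z \<in> carrier G. \<forall>g \<in> carrier G. z \<otimes>\<^bsub>G\<^esub> g = g \<otimes>\<^bsub>G\<^esub> z}"

definition group_involution :: "('g, 'b) monoid_scheme \<Rightarrow> ('g \<Rightarrow> 'g) \<Rightarrow> bool" where
  "group_involution G s \<longleftrightarrow>
     (\<forall>g \<in> carrier G. s g \<in> carrier G) \<and>
     (\<forall>g \<in> carrier G. \<forall>h \<in> carrier G. s (g \<otimes>\<^bsub>G\<^esub> h) = s h \<otimes>\<^bsub>G\<^esub> s g) \<and>
     (\<forall>g \<in> carrier G. s (s g) = g)"

text \<open>Elements of the group algebra F G: finitely supported coefficient functions
  on the carrier of G (an element sum_g a_g g is represented by g \<mapsto> a_g).\<close>
definition group_alg :: "('g, 'b) monoid_scheme \<Rightarrow> ('g \<Rightarrow> 'f::field) set" where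
  "group_alg G = {a. finite {g. a g \<noteq> 0} \<and> {g. a g \<noteq> 0} \<subseteq> carrier G}"

definition galg_mult :: "('g, 'b) monoid_scheme \<Rightarrow> ('g \<Rightarrow> 'f::field) \<Rightarrow> ('g \<Rightarrow> 'f) \<Rightarrow> 'g \<Rightarrow> 'f" where
  "galg_mult G a b x =
     (if x \<in> carrier G
      then (\<Sum>g \<in> {g \<in> carrier G. a g \<noteq> 0}. a g * b (inv\<^bsub>G\<^esub> g \<otimes>\<^bsub>G\<^esub> x))
      else 0)"

text \<open>Linear extension of the involution s to F G:
  (sum_g a_g g)^* = sum_g a_g s(g), whose coefficient at x is a(s x).\<close>
definition galg_star :: "('g, 'b) monoid_scheme \<Rightarrow> ('g \<Rightarrow> 'g) \<Rightarrow> ('g \<Rightarrow> 'f::field) \<Rightarrow> 'g \<Rightarrow> 'f" where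
  "galg_star G s a x = (if x \<in> carrier G then a (s x) else 0)"

definition galg_normal :: "('g, 'b) monoid_scheme \<Rightarrow> ('g \<Rightarrow> 'g) \<Rightarrow> 'f::field itself \<Rightarrow> bool" where
  "galg_normal G s _ \<longleftrightarrow>
     (\<forall>a \<in> (group_alg G :: ('g \<Rightarrow> 'f) set).
        galg_mult G a (galg_star G s a) = galg_mult G (galg_star G s a) a)"

end

theory Submission
  imports Defs
begin

text \<open>Apply normality to the indicator element of a finite set P. The coefficient of z in a
  product of indicators counts the factorizations z = p q, so normality equates (in F) the
  number of factorizations of z through P \<times> P^* and through P^* \<times> P. For P = {p} this gives
  p p^* = p^* p; for P = {x, y^*} and z = x y it shows that x y = y x or x y = x^* y^*, where
  char F \<noteq> 2 rules out a count of 2. Finally, if g and h do not commute, neither do g and g h,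
  nor h g and g, so g g h = g^* h^* g^* = h g g.\<close>

definition galg_indicator :: "'g set \<Rightarrow> 'g \<Rightarrow> 'f::field" where
  "galg_indicator P x = (if x \<in> P then 1 else 0)"

lemma galg_indicator_in_group_alg:
  assumes "finite P" "P \<subseteq> carrier G"
  shows "(galg_indicator P :: 'g \<Rightarrow> 'f::field) \<in> group_alg G"
proof -
  have "{g. (galg_indicator P g :: 'f) \<noteq> 0} = P" by (auto simp: galg_indicator_def)
  with assms show ?thesis by (simp add: group_alg_def)
qed

lemma galg_star_indicator:
  assumes "group_involution G s" "P \<subseteq> carrier G"
  shows "galg_star G s (galg_indicator P) = galg_indicator (s ` P)"
proof
  fix x
  have closed: "\<And>g. g \<in> carrier G \<Longrightarrow> s g \<in> carrier G"
    and involutive: "\<And>g. g \<in> carrier G \<Longrightarrow> s (s g) = g"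
    using assms(1) unfolding group_involution_def by auto
  have "x \<in> carrier G \<and> s x \<in> P \<longleftrightarrow> x \<in> s ` P"
    using assms(2) closed involutive by (auto intro: image_eqI[of x s "s x"])
  then show "galg_star G s (galg_indicator P) x = galg_indicator (s ` P) x"
    by (auto simp: galg_star_def galg_indicator_def)
qed

lemma (in group) galg_mult_indicator:
  assumes "finite P" "P \<subseteq> carrier G" "z \<in> carrier G"
  shows "galg_mult G (galg_indicator P) (galg_indicator Q) z
       = (of_nat (card {p \<in> P. inv p \<otimes> z \<in> Q}) :: 'f::field)"
proof -
  have "{g \<in> carrier G. (galg_indicator P g :: 'f) \<noteq> 0} = P"
    using assms(2) by (auto simp: galg_indicator_def)
  then have "galg_mult G (galg_indicator P) (galg_indicator Q) z
      = (\<Sum>p\<in>P. if inv p \<otimes> z \<in> Q then 1 else (0::'f))"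
    using assms(2,3) by (auto simp: galg_mult_def galg_indicator_def intro!: sum.cong)
  also have "\<dots> = of_nat (card {p \<in> P. inv p \<otimes> z \<in> Q})"
    using assms(1) by (simp add: sum.If_cases Int_def)
  finally show ?thesis .
qed

locale group_with_involution = group G for G (structure) +
  fixes s :: "'g \<Rightarrow> 'g"
  assumes group_involution: "group_involution G s"
begin

lemma involution_closed [simp]: "g \<in> carrier G \<Longrightarrow> s g \<in> carrier G"
  using group_involution unfolding group_involution_def by blast

lemma involution_involutive [simp]: "g \<in> carrier G \<Longrightarrow> s (s g) = g"
  using group_involution unfolding group_involution_def by blast

lemma involution_mult:
  "g \<in> carrier G \<Longrightarrow> h \<in> carrier G \<Longrightarrow> s (g \<otimes> h) = s h \<otimes> s g"
  using group_involution unfolding group_involution_def by blast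

lemma galg_normal_factorization_count:
  assumes "galg_normal G s TYPE('f::field)" "finite P" "P \<subseteq> carrier G" "z \<in> carrier G"
  shows "(of_nat (card {p \<in> P. inv p \<otimes> z \<in> s ` P}) :: 'f)
       = of_nat (card {p \<in> s ` P. inv p \<otimes> z \<in> P})"
proof -
  let ?\<alpha> = "galg_indicator P :: 'g \<Rightarrow> 'f"
  have "s ` P \<subseteq> carrier G" using assms(3) by auto
  moreover have "galg_mult G ?\<alpha> (galg_star G s ?\<alpha>) z = galg_mult G (galg_star G s ?\<alpha>) ?\<alpha> z"
    using assms(1) galg_indicator_in_group_alg[OF assms(2,3)] unfolding galg_normal_def by metis
  ultimately show ?thesis
    using assms(2-4) by (simp add: galg_star_indicator[OF group_involution] galg_mult_indicator)
qed

lemma galg_normal_commutes_with_involution: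
  assumes "galg_normal G s TYPE('f::field)" "p \<in> carrier G"
  shows "p \<otimes> s p = s p \<otimes> p"
proof -
  have "{q \<in> {p}. inv q \<otimes> (p \<otimes> s p) \<in> s ` {p}} = {p}"
    using assms(2) by (auto simp: m_assoc[symmetric])
  then have "(of_nat (card {q \<in> {s p}. inv q \<otimes> (p \<otimes> s p) \<in> {p}}) :: 'f) = 1"
    using galg_normal_factorization_count[OF assms(1), of "{p}" "p \<otimes> s p"] assms(2) by simp
  then have "{q \<in> {s p}. inv q \<otimes> (p \<otimes> s p) \<in> {p}} \<noteq> {}"
    by (metis card.empty of_nat_0 zero_neq_one)
  then have "inv (s p) \<otimes> (p \<otimes> s p) = p"
    by auto
  with assms(2) show ?thesis by (metis inv_solve_left involution_closed m_closed)
qed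

lemma galg_normal_commute_or_involution:
  assumes "galg_normal G s TYPE('f::field)" "(2::'f) \<noteq> 0"
    and x: "x \<in> carrier G" and y: "y \<in> carrier G"
  shows "x \<otimes> y = y \<otimes> x \<or> x \<otimes> y = s x \<otimes> s y"
proof (rule ccontr)
  assume "\<not> ?thesis"
  then have no_commute: "x \<otimes> y \<noteq> y \<otimes> x" and no_star: "x \<otimes> y \<noteq> s x \<otimes> s y" by auto
  have comm_x: "x \<otimes> s x = s x \<otimes> x" and comm_y: "y \<otimes> s y = s y \<otimes> y"
    using galg_normal_commutes_with_involution[OF assms(1)] x y by auto
  have x_ne: "x \<noteq> s y"
    using no_commute comm_y by auto
  have factor: "inv p \<otimes> (x \<otimes> y) = q \<longleftrightarrow> x \<otimes> y = p \<otimes> q"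
    if "p \<in> carrier G" "q \<in> carrier G" for p q
    using that x y by (metis inv_solve_left m_closed)
  define P where "P = {x, s y}"
  have sP: "s ` P = {s x, y}" using y by (simp add: P_def)
  let ?A = "{p \<in> P. inv p \<otimes> (x \<otimes> y) \<in> s ` P}"
  have "x \<in> ?A"
    using x y by (simp add: P_def sP factor)
  then have "card ?A \<noteq> 0"
    by (auto simp: P_def)
  moreover have "card ?A \<le> card P"
    by (rule card_mono) (auto simp: P_def)
  moreover have "card P \<le> 2"
    by (simp add: P_def card_insert_if)
  ultimately have card_one_or_two: "card ?A = 1 \<or> card ?A = 2"
    by linarith
  have "x \<otimes> y \<noteq> s x \<otimes> x"
    using comm_x x y x_ne by (metis involution_involutive Units_l_cancel Units_eq involution_closed)
  moreover have "x \<otimes> y \<noteq> y \<otimes> s y"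
    using comm_y x y x_ne by (metis right_cancel involution_closed)
  ultimately have no_factorization: "{p \<in> s ` P. inv p \<otimes> (x \<otimes> y) \<in> P} = {}"
    using x y no_commute no_star by (auto simp: P_def sP factor)
  have "finite P" "P \<subseteq> carrier G"
    using x y by (auto simp: P_def)
  then have "(of_nat (card ?A) :: 'f) = 0"
    using galg_normal_factorization_count[OF assms(1), of P "x \<otimes> y"] x y no_factorization
    by simp
  with card_one_or_two assms(2) show False by auto
qed

lemma square_central_if_commute_or_involution:
  assumes commute_or_involution:
    "\<And>x y. x \<in> carrier G \<Longrightarrow> y \<in> carrier G \<Longrightarrow> x \<otimes> y = y \<otimes> x \<or> x \<otimes> y = s x \<otimes> s y"
    and g: "g \<in> carrier G"
  shows "g \<otimes> g \<in> group_center G"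
proof -
  have "g \<otimes> g \<otimes> h = h \<otimes> (g \<otimes> g)" if h: "h \<in> carrier G" for h
  proof (cases "g \<otimes> h = h \<otimes> g")
    case True
    with g h show ?thesis by (metis m_assoc)
  next
    case False
    have "g \<otimes> (g \<otimes> h) \<noteq> (g \<otimes> h) \<otimes> g"
      using False g h by (simp add: m_assoc)
    then have left: "g \<otimes> (g \<otimes> h) = s g \<otimes> (s h \<otimes> s g)"
      using commute_or_involution[of g "g \<otimes> h"] g h by (simp add: involution_mult)
    have "(h \<otimes> g) \<otimes> g \<noteq> g \<otimes> (h \<otimes> g)"
      using False g h by (metis m_assoc m_closed right_cancel)
    then have right: "(h \<otimes> g) \<otimes> g = (s g \<otimes> s h) \<otimes> s g"
      using commute_or_involution[of "h \<otimes> g" g] g h by (simp add: involution_mult)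
    from left right g h show ?thesis by (simp add: m_assoc)
  qed
  with g show ?thesis unfolding group_center_def by auto
qed

end

theorem lemma4:
  fixes G :: "('g, 'b) monoid_scheme" and s :: "'g \<Rightarrow> 'g"
  assumes "group G"
    and "infinite (UNIV :: 'f::field set)"
    and "(2::'f) \<noteq> 0"
    and "group_involution G s"
    and "galg_normal G s TYPE('f)"
  shows "\<forall>g \<in> carrier G. g \<otimes>\<^bsub>G\<^esub> g \<in> group_center G"
proof -
  interpret group_with_involution G s
    using assms(1,4) by (simp add: group_with_involution_def group_with_involution_axioms_def)
  show ?thesis
    using square_central_if_commute_or_involution
      galg_normal_commute_or_involution[OF assms(5,3)] by blast
qed

end
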